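(* Let $q(x,y)=ax^2+bxy+cy^2$ with $a,b,c\in\mathbb{Z}$ be a positive definite binary quadratic form (so $\Delta(q)=b^2-4ac<0$ and $a>0$), and let $k\in\mathbb{Z}$. Then the equation $q(x,y)=k$ has at most $4$ solutions $(x,y)\in\mathbb{Z}^2$ satisfying $$|x|\le\frac{|k|^{1/4}}{\sqrt{-\Delta(q)}}.$$ *)

theory Defs
  imports "HOL-Analysis.Analysis"
begin

end

theory Submission
  imports Defs
begin

text \<open>
  Multiplying \<open>q(x,y) = k\<close> by \<open>4c\<close> and completing the square gives
  \<open>u\<^sup>2 + D x\<^sup>2 = 4ck\<close> with \<open>u = 2cy + bx\<close> and \<open>D = -\<Delta>(q) > 0\<close>, while the bound
  on \<open>|x|\<close> says \<open>(D x\<^sup>2)\<^sup>2 \<le> |k|\<close>. So \<open>u\<^sup>2\<close> lies within \<open>\<surd>k\<close> of \<open>4ck\<close>; two distinct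
  integers \<open>u\<close> of the same sign have squares differing by at least \<open>|u| + |u'|\<close>,
  which is far more than \<open>\<surd>k\<close>. Hence the sign of \<open>u\<close> determines \<open>u\<close>, then \<open>x\<^sup>2\<close>,
  and \<open>y\<close> is recovered from \<open>u\<close> and \<open>x\<close>: at most two solutions per sign.
\<close>

definition small_solutions :: "int \<Rightarrow> int \<Rightarrow> int \<Rightarrow> int \<Rightarrow> (int \<times> int) set" where
  "small_solutions a b c k = {(x, y). a*x^2 + b*x*y + c*y^2 = k \<and>
     real_of_int \<bar>x\<bar> \<le> real_of_int \<bar>k\<bar> powr (1/4) / sqrt (- real_of_int (b^2 - 4*a*c))}"

lemma four_c_mult_quadratic_form:
  fixes a b c x y :: int
  shows "4*c*(a*x^2 + b*x*y + c*y^2) = (2*c*y + b*x)^2 + (4*a*c - b^2)*x^2"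
  by (simp add: power2_eq_square algebra_simps)

lemma pos_definite_coeff_pos:
  fixes a b c :: int
  assumes "b^2 - 4*a*c < 0" and "a > 0"
  shows "c > 0"
proof (rule ccontr)
  assume "\<not> c > 0"
  hence "a*c \<le> 0" using \<open>a > 0\<close> by (simp add: mult_nonneg_nonpos)
  moreover have "b^2 \<ge> 0" by simp
  ultimately show False using assms(1) by linarith
qed

lemma int_le_power2: "0 \<le> (t::int) \<Longrightarrow> t \<le> t^2"
  by (cases "t = 0") (simp_all add: power2_eq_square)

lemma square_le_of_abs_le_root4_div_sqrt:
  fixes x k D :: int
  assumes "D > 0"
    and "real_of_int \<bar>x\<bar> \<le> real_of_int \<bar>k\<bar> powr (1/4) / sqrt (real_of_int D)"
  shows "(D*x^2)^2 \<le> \<bar>k\<bar>"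
proof -
  have "real_of_int \<bar>x\<bar> * sqrt (real_of_int D) \<le> real_of_int \<bar>k\<bar> powr (1/4)"
    using assms by (simp add: pos_le_divide_eq)
  hence "(real_of_int \<bar>x\<bar> * sqrt (real_of_int D))^4 \<le> (real_of_int \<bar>k\<bar> powr (1/4))^4"
    using \<open>D > 0\<close> by (intro power_mono) auto
  also have "\<dots> = real_of_int \<bar>k\<bar>"
    by (cases "k = 0") (simp_all flip: powr_realpow add: powr_powr)
  also have "(real_of_int \<bar>x\<bar> * sqrt (real_of_int D))^4
           = (real_of_int \<bar>x\<bar>)^4 * (sqrt (real_of_int D))^2 * (sqrt (real_of_int D))^2"
    by (simp add: power_mult_distrib flip: power_add)
  also have "\<dots> = real_of_int ((D*x^2)^2)"
    using \<open>D > 0\<close> by (simp add: power_even_abs power2_eq_square power4_eq_xxxx)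
  finally show ?thesis by linarith
qed

lemma eq_if_sum_square_eq_small_defect:
  fixes v w P Q N m :: int
  assumes "v^2 + P = N" "w^2 + Q = N"
    and "0 \<le> P" "0 \<le> Q" "P^2 \<le> m" "Q^2 \<le> m" "3*m \<le> 2*N"
    and "v * w > 0"
  shows "v = w"
proof (rule ccontr)
  assume "v \<noteq> w"
  hence "(v - w)^2 \<ge> 1"
    by (metis add_0 diff_eq_diff_eq diff_self int_one_le_iff_zero_less zero_less_power2)
  hence "(v + w)^2 \<le> (v - w)^2 * (v + w)^2"
    using mult_right_mono[of 1 "(v - w)^2" "(v + w)^2"] by simp
  also have "\<dots> = (v^2 - w^2)^2"
    by (simp add: power2_eq_square algebra_simps)
  also have "\<dots> = (Q - P)^2"
    using assms(1,2) by (metis add_diff_cancel_left' add_diff_cancel_right' diff_diff_eq2 diff_add_cancel)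
  also have "\<dots> \<le> (max P Q)^2"
  proof -
    have "\<bar>Q - P\<bar> \<le> max P Q" using assms(3,4) by linarith
    thus ?thesis by (metis abs_ge_zero power2_abs power_mono)
  qed
  also have "\<dots> \<le> m" using assms(5,6) by (simp add: max_def)
  finally have "(v + w)^2 \<le> m" .
  moreover have "(v + w)^2 = v^2 + w^2 + 2*(v * w)"
    by (simp add: power2_eq_square algebra_simps)
  moreover have "P \<le> m" "Q \<le> m"
    using int_le_power2[OF assms(3)] int_le_power2[OF assms(4)] assms(5,6) by linarith+
  ultimately show False using assms(1,2,7,8) by linarith
qed

lemma small_solutions_nonpos:
  fixes a b c k :: int
  assumes "b^2 - 4*a*c < 0" and "a > 0" and "k \<le> 0"
  shows "small_solutions a b c k \<subseteq> {(0, 0)}"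
proof
  fix p assume "p \<in> small_solutions a b c k"
  then obtain x y where p: "p = (x, y)" and q: "a*x^2 + b*x*y + c*y^2 = k"
    by (auto simp: small_solutions_def)
  have c: "c > 0" using pos_definite_coeff_pos[OF assms(1,2)] .
  have "(2*c*y + b*x)^2 + (4*a*c - b^2)*x^2 = 4*c*k"
    using four_c_mult_quadratic_form[of c a x b y] q by simp
  moreover have "4*c*k \<le> 0" using c \<open>k \<le> 0\<close> by (simp add: mult_nonneg_nonpos)
  moreover have "(4*a*c - b^2)*x^2 \<ge> 0" using assms(1) by simp
  moreover have "(2*c*y + b*x)^2 \<ge> 0" by simp
  ultimately have "(2*c*y + b*x)^2 = 0" "(4*a*c - b^2)*x^2 = 0" by linarith+
  hence "x = 0" "2*c*y + b*x = 0" using assms(1) by auto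
  thus "p \<in> {(0, 0)}" using p c by simp
qed

lemma small_solution_2cy_plus_bx_nonzero:
  fixes a b c k x y :: int
  assumes "b^2 - 4*a*c < 0" and "a > 0" and "k \<ge> 1"
    and "(x, y) \<in> small_solutions a b c k"
  shows "2*c*y + b*x \<noteq> 0"
proof
  assume u: "2*c*y + b*x = 0"
  define D where "D = 4*a*c - b^2"
  have "D > 0" using assms(1) by (simp add: D_def)
  have c: "c > 0" using pos_definite_coeff_pos[OF assms(1,2)] .
  have "D*x^2 = 4*c*k"
    using four_c_mult_quadratic_form[of c a x b y] u assms(4)
    by (simp add: small_solutions_def D_def)
  moreover have "(D*x^2)^2 \<le> k"
    using square_le_of_abs_le_root4_div_sqrt[OF \<open>D > 0\<close>, of x k] assms(3,4)
    by (simp add: small_solutions_def D_def)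
  moreover have "k < (4*c*k)^2"
  proof -
    have "1 * k < (4*c) * k" using c assms(3) by (intro mult_strict_right_mono) auto
    moreover have "4*c*k \<le> (4*c*k)^2" using c assms(3) by (intro int_le_power2) simp
    ultimately show ?thesis by simp
  qed
  ultimately show False by simp
qed

lemma small_solutions_same_sign:
  fixes a b c k x y x' y' :: int
  assumes "b^2 - 4*a*c < 0" and "a > 0" and "k \<ge> 1"
    and "(x, y) \<in> small_solutions a b c k" "(x', y') \<in> small_solutions a b c k"
    and "(2*c*y + b*x) * (2*c*y' + b*x') > 0"
  shows "2*c*y + b*x = 2*c*y' + b*x' \<and> x^2 = x'^2"
proof -
  define D where "D = 4*a*c - b^2"
  have "D > 0" using assms(1) by (simp add: D_def)
  have c: "c > 0" using pos_definite_coeff_pos[OF assms(1,2)] .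
  have eq: "(2*c*y + b*x)^2 + D*x^2 = 4*c*k" "(2*c*y' + b*x')^2 + D*x'^2 = 4*c*k"
    using four_c_mult_quadratic_form[of c a x b y] four_c_mult_quadratic_form[of c a x' b y']
      assms(4,5)
    by (simp_all add: small_solutions_def D_def)
  have bound: "(D*x^2)^2 \<le> k" "(D*x'^2)^2 \<le> k"
    using square_le_of_abs_le_root4_div_sqrt[OF \<open>D > 0\<close>, of x k]
      square_le_of_abs_le_root4_div_sqrt[OF \<open>D > 0\<close>, of x' k] assms(3,4,5)
    by (simp_all add: small_solutions_def D_def)
  have "3*k \<le> 2*(4*c*k)" using c assms(3) by simp
  hence u: "2*c*y + b*x = 2*c*y' + b*x'"
    using eq_if_sum_square_eq_small_defect[OF eq _ _ bound] assms(6) \<open>D > 0\<close> by simp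
  hence "D*x^2 = D*x'^2" using eq by (metis add_left_cancel)
  thus ?thesis using u \<open>D > 0\<close> by simp
qed

lemma finite_card_le_2_if_inj_on_squares_eq:
  fixes f :: "'a \<Rightarrow> int"
  assumes "inj_on f A" and "\<And>p q. p \<in> A \<Longrightarrow> q \<in> A \<Longrightarrow> f p^2 = f q^2"
  shows "finite A \<and> card A \<le> 2"
proof (cases "A = {}")
  case False
  then obtain p0 where "p0 \<in> A" by auto
  hence image: "f ` A \<subseteq> {f p0, - f p0}"
    using assms(2) by (auto simp: power2_eq_iff)
  hence finite_image: "finite (f ` A)" by (rule finite_subset) simp
  have "card (f ` A) \<le> card {f p0, - f p0}" by (rule card_mono[OF _ image]) simp
  also have "\<dots> \<le> 2" by (simp add: card_insert_if)
  finally show ?thesis using finite_image assms(1) by (simp add: finite_image_iff card_image)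
qed simp

lemma small_solutions_of_sign_card_le_2:
  fixes a b c k :: int
  assumes "b^2 - 4*a*c < 0" and "a > 0" and "k \<ge> 1"
    and "A \<subseteq> small_solutions a b c k"
    and "\<And>x y x' y'. (x, y) \<in> A \<Longrightarrow> (x', y') \<in> A \<Longrightarrow> (2*c*y + b*x) * (2*c*y' + b*x') > 0"
  shows "finite A \<and> card A \<le> 2"
proof (rule finite_card_le_2_if_inj_on_squares_eq[where f = fst])
  have c: "c > 0" using pos_definite_coeff_pos[OF assms(1,2)] .
  show "inj_on fst A"
  proof (rule inj_onI)
    fix p q assume "p \<in> A" "q \<in> A" "fst p = fst q"
    then obtain x y y' where pq: "p = (x, y)" "q = (x, y')" "(x, y) \<in> A" "(x, y') \<in> A"
      by (metis prod.collapse)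
    hence "2*c*y + b*x = 2*c*y' + b*x"
      using small_solutions_same_sign[OF assms(1-3)] assms(4,5) by blast
    thus "p = q" using pq c by simp
  qed
  show "fst p^2 = fst q^2" if "p \<in> A" "q \<in> A" for p q
    using small_solutions_same_sign[OF assms(1-3), of "fst p" "snd p" "fst q" "snd q"]
      assms(4) assms(5)[of "fst p" "snd p" "fst q" "snd q"] that
    by auto
qed

theorem lemma1:
  fixes a b c k :: int
  assumes "b^2 - 4*a*c < 0" and "a > 0"
  shows "finite {(x::int, y::int). a*x^2 + b*x*y + c*y^2 = k \<and>
                 real_of_int \<bar>x\<bar> \<le> real_of_int \<bar>k\<bar> powr (1/4) / sqrt (- real_of_int (b^2 - 4*a*c))}
       \<and> card {(x::int, y::int). a*x^2 + b*x*y + c*y^2 = k \<and>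
                 real_of_int \<bar>x\<bar> \<le> real_of_int \<bar>k\<bar> powr (1/4) / sqrt (- real_of_int (b^2 - 4*a*c))} \<le> 4"
proof -
  define S where "S = small_solutions a b c k"
  have "finite S \<and> card S \<le> 4"
  proof (cases "k \<ge> 1")
    case False
    hence trivial: "S \<subseteq> {(0, 0)}" using small_solutions_nonpos[OF assms] by (simp add: S_def)
    hence "finite S" by (rule finite_subset) simp
    moreover have "card S \<le> card {(0::int, 0::int)}" by (rule card_mono[OF _ trivial]) simp
    ultimately show ?thesis by simp
  next
    case True
    define Pos where "Pos = {(x, y) \<in> S. 2*c*y + b*x > 0}"
    define Neg where "Neg = {(x, y) \<in> S. 2*c*y + b*x < 0}"
    have "finite Pos \<and> card Pos \<le> 2"
      by (rule small_solutions_of_sign_card_le_2[OF assms True])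
        (auto simp: Pos_def S_def intro: mult_pos_pos)
    moreover have "finite Neg \<and> card Neg \<le> 2"
      by (rule small_solutions_of_sign_card_le_2[OF assms True])
        (auto simp: Neg_def S_def intro: mult_neg_neg)
    moreover have "S = Pos \<union> Neg"
    proof (intro equalityI subsetI)
      fix p assume "p \<in> S"
      moreover obtain x y where "p = (x, y)" by fastforce
      ultimately show "p \<in> Pos \<union> Neg"
        using small_solution_2cy_plus_bx_nonzero[OF assms True, of x y]
        by (auto simp: Pos_def Neg_def S_def)
    qed (auto simp: Pos_def Neg_def)
    ultimately show ?thesis using card_Un_le[of Pos Neg] by auto
  qed
  thus ?thesis by (simp add: S_def small_solutions_def)
qed

end
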